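(* Let $\phi_0=\begin{pmatrix}0&1\\0&0\end{pmatrix}$ and let $\phi_1,\phi_2,\psi\in\mathfrak{sl}(2,\mathbf{C})$ satisfy $$[\psi,\phi_0]=\tfrac12[\phi_0,\phi_1],\qquad [\psi,\phi_1]=[\phi_0,\phi_2],\qquad [\psi,\phi_2]=\tfrac12[\phi_1,\phi_2].$$ Then either $[\phi_0,\phi_1]=0$, in which case $\phi_1,\phi_2$ are multiples of $\phi_0$ (so $\phi=\phi_0+\phi_1z+\phi_2z^2$ is nilpotent), or there is $a\in\mathbf{C}$ with $$\psi=a\phi_0-\tfrac12\phi_1,\qquad \phi_2=a\phi_1-a^2\phi_0.$$ In the latter case, setting $\phi_-=-z\psi+\phi_0+\tfrac z2\phi_1$ and $\phi_+=\tfrac12\phi_1+\phi_2z+\psi$ (so $\phi_-+z\phi_+=\phi$), one has $\phi_-=(1-az)\phi_0+z\phi_1$, $\phi_+=a\phi_-$, and $\phi_-^2=\tfrac12\operatorname{tr}(\phi_-^2)\,I$ with $\operatorname{tr}\phi_-^2=2z(1-az)\operatorname{tr}(\phi_0\phi_1)+z^2\operatorname{tr}(\phi_1^2)$. Consequently the curve $C$ in affine coordinates $(x,y,z)$ on $\mathcal{O}(1)\oplus\mathcal{O}(1)$ on which the cokernel of the commuting family $u(x-\phi_+(z))+v(y-\phi_-(z))$ is supported is $\{y=ax,\ x^2=2z(1-az)\operatorname{tr}(\phi_0\phi_1)+z^2\operatorname{tr}(\phi_1^2)\}$, which is a nonsingular conic in the plane $y=ax$ when $\operatorname{tr}(\phi_0\phi_1)\neq0$,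 and a pair of lines meeting at $x=y=z=0$ when $\operatorname{tr}(\phi_0\phi_1)=0$.
   Context: These equations are the conditions for a zero of the Nahm flow (a fixed point of Nahm's equations up to conjugation) for a rank 2 trace-free co-Higgs field $\phi=(\phi_0+\phi_1z+\phi_2z^2)\frac{d}{dz}$ on the trivial bundle over ${\rm P}^1$, with $\psi$ the infinitesimal conjugation; $x,y$ denote the tautological fibre coordinates of the two $\mathcal{O}(1)$ factors. *)

theory Defs
  imports "HOL-Analysis.Analysis"
begin

type_synonym cmat = "complex^2^2"

definition comm :: "cmat \<Rightarrow> cmat \<Rightarrow> cmat" where
  "comm A B = A ** B - B ** A"

definition smul :: "complex \<Rightarrow> cmat \<Rightarrow> cmat" where
  "smul c A = (\<chi> i j. c * A $ i $ j)"

definition sl2 :: "cmat \<Rightarrow> bool" where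
  "sl2 A \<longleftrightarrow> trace A = 0"

definition phi0 :: cmat where
  "phi0 = (\<chi> i j. if i = 1 \<and> j = 2 then 1 else 0)"

definition phi_of :: "cmat \<Rightarrow> cmat \<Rightarrow> cmat \<Rightarrow> complex \<Rightarrow> cmat" where
  "phi_of p0 p1 p2 z = p0 + smul z p1 + smul (z^2) p2"

definition phi_minus :: "cmat \<Rightarrow> cmat \<Rightarrow> cmat \<Rightarrow> complex \<Rightarrow> cmat" where
  "phi_minus psi p0 p1 z = smul (- z) psi + p0 + smul (z / 2) p1"

definition phi_plus :: "cmat \<Rightarrow> cmat \<Rightarrow> cmat \<Rightarrow> complex \<Rightarrow> cmat" where
  "phi_plus psi p1 p2 z = smul (1 / 2) p1 + smul z p2 + psi"

text \<open>Support (as a set, in affine coordinates (x,y,z)) of the cokernel of the family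
  u(x - P(z)) + v(y - M(z)), (u,v) arbitrary: the points where the map
  C^2 + C^2 -> C^2, (s,t) |-> (x - P z) s + (y - M z) t, is not surjective, i.e. where
  some nonzero covector annihilates both x - P z and y - M z.\<close>
definition coker_support :: "(complex \<Rightarrow> cmat) \<Rightarrow> (complex \<Rightarrow> cmat) \<Rightarrow> (complex \<times> complex \<times> complex) set" where
  "coker_support P M = {(x, y, z). \<exists>\<xi> :: complex^2. \<xi> \<noteq> 0 \<and>
      \<xi> v* (smul x (mat 1) - P z) = 0 \<and> \<xi> v* (smul y (mat 1) - M z) = 0}"

text \<open>A plane affine curve f(s,t) = 0 is a nonsingular conic if f is (up to a nonzero scalar)
  the dehomogenisation w = 1 of a ternary quadratic form whose symmetric matrix is invertible
  (i.e. its projective closure is a nonsingular conic).\<close>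
definition quad_form :: "complex^3^3 \<Rightarrow> complex^3 \<Rightarrow> complex" where
  "quad_form S v = (\<Sum>i\<in>UNIV. \<Sum>j\<in>UNIV. S $ i $ j * v $ i * v $ j)"

definition nonsingular_conic :: "(complex \<Rightarrow> complex \<Rightarrow> complex) \<Rightarrow> bool" where
  "nonsingular_conic f \<longleftrightarrow> (\<exists>S :: complex^3^3. \<exists>k :: complex.
      transpose S = S \<and> det S \<noteq> 0 \<and> k \<noteq> 0 \<and>
      (\<forall>s t. quad_form S (vector [s, t, 1]) = k * f s t))"

end

theory Submission
  imports Defs
begin

text \<open>Solving the three equations entry by entry: the first fixes \<open>\<psi>\<close> up to a multiple of
  \<open>\<phi>\<^sub>0\<close>, the second forces \<open>\<phi>\<^sub>2 = a\<phi>\<^sub>1 + c\<phi>\<^sub>0\<close>, and the third reads \<open>(a\<^sup>2 + c)[\<phi>\<^sub>0,\<phi>\<^sub>1] = 0\<close>.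
  Once \<open>\<psi>\<close> and \<open>\<phi>\<^sub>2\<close> are known, \<open>\<phi>\<^sub>+ = a\<phi>\<^sub>-\<close>, so a covector annihilating \<open>x - \<phi>\<^sub>+\<close> and
  \<open>y - \<phi>\<^sub>-\<close> exists iff \<open>x = ay\<close> and \<open>y\<close> is an eigenvalue of the trace-free \<open>\<phi>\<^sub>-\<close>, i.e.
  \<open>2y\<^sup>2 = tr \<phi>\<^sub>-\<^sup>2\<close> by Cayley-Hamilton.\<close>

definition mat2 :: "complex \<Rightarrow> complex \<Rightarrow> complex \<Rightarrow> complex \<Rightarrow> cmat" where
  "mat2 a b c d = (\<chi> i j. if i = 1 then (if j = 1 then a else b) else (if j = 1 then c else d))"

lemma mat2_nth [simp]:
  "mat2 a b c d $ 1 $ 1 = a" "mat2 a b c d $ 1 $ 2 = b"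
  "mat2 a b c d $ 2 $ 1 = c" "mat2 a b c d $ 2 $ 2 = d"
  by (simp_all add: mat2_def)

lemma cmat_eq_iff:
  "(A::cmat) = B \<longleftrightarrow> A$1$1 = B$1$1 \<and> A$1$2 = B$1$2 \<and> A$2$1 = B$2$1 \<and> A$2$2 = B$2$2"
  by (auto simp: vec_eq_iff forall_2)

lemma cvec2_eq_iff: "(v::complex^2) = w \<longleftrightarrow> v$1 = w$1 \<and> v$2 = w$2"
  by (auto simp: vec_eq_iff forall_2)

lemma sl2_obtain_mat2:
  assumes "sl2 A"
  obtains p q r where "A = mat2 p q r (-p)"
  using assms by (intro that[of "A$1$1" "A$1$2" "A$2$1"])
    (simp add: cmat_eq_iff sl2_def trace_def sum_2 eq_neg_iff_add_eq_0 add.commute)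

lemmas cmat_entry_simps = cmat_eq_iff comm_def smul_def phi0_def matrix_matrix_mult_def sum_2
  trace_def sl2_def mat_def phi_of_def phi_minus_def phi_plus_def

lemma comm_phi0_eq_0_iff:
  assumes "sl2 B"
  shows "comm phi0 B = 0 \<longleftrightarrow> (\<exists>c. B = smul c phi0)"
proof -
  obtain p q r where "B = mat2 p q r (-p)" using assms by (rule sl2_obtain_mat2)
  then show ?thesis by (auto simp: cmat_entry_simps)
qed

lemma nahm_fixed_point_psi:
  assumes "sl2 phi1" "sl2 psi"
    and "comm psi phi0 = smul (1/2) (comm phi0 phi1)"
  shows "\<exists>a. psi = smul a phi0 - smul (1/2) phi1"
proof -
  obtain p q r where phi1: "phi1 = mat2 p q r (-p)" using assms(1) by (rule sl2_obtain_mat2)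
  obtain s t u where psi: "psi = mat2 s t u (-s)" using assms(2) by (rule sl2_obtain_mat2)
  have "u = -r/2" "s = -p/2"
    using assms(3) by (simp_all add: phi1 psi cmat_entry_simps field_simps)
  then have "psi = smul (t + q/2) phi0 - smul (1/2) phi1"
    by (simp add: phi1 psi cmat_entry_simps)
  then show ?thesis ..
qed

lemma nahm_fixed_point_phi2:
  assumes "sl2 phi1" "sl2 phi2"
    and "comm (smul a phi0 - smul (1/2) phi1) phi1 = comm phi0 phi2"
  shows "\<exists>c. phi2 = smul a phi1 + smul c phi0"
proof -
  obtain p q r where phi1: "phi1 = mat2 p q r (-p)" using assms(1) by (rule sl2_obtain_mat2)
  obtain b c d where phi2: "phi2 = mat2 b c d (-b)" using assms(2) by (rule sl2_obtain_mat2)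
  have "b = a*p" "d = a*r"
    using assms(3) by (simp_all add: phi1 phi2 cmat_entry_simps algebra_simps)
  then have "phi2 = smul a phi1 + smul (c - a*q) phi0"
    by (simp add: phi1 phi2 cmat_entry_simps)
  then show ?thesis ..
qed

lemma nahm_third_equation_defect:
  "comm (smul a phi0 - smul (1/2) phi1) (smul a phi1 + smul c phi0)
     - smul (1/2) (comm phi1 (smul a phi1 + smul c phi0))
   = smul (a^2 + c) (comm phi0 phi1)"
  by (simp add: cmat_entry_simps power2_eq_square algebra_simps)

lemma smul_eq_0_iff: "smul c A = 0 \<longleftrightarrow> c = 0 \<or> A = 0"
  by (auto simp: smul_def vec_eq_iff)

lemma nahm_fixed_point_solution:
  assumes "sl2 phi1" "sl2 phi2" "sl2 psi"
    and "comm psi phi0 = smul (1/2) (comm phi0 phi1)"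
    and "comm psi phi1 = comm phi0 phi2"
    and "comm psi phi2 = smul (1/2) (comm phi1 phi2)"
    and "comm phi0 phi1 \<noteq> 0"
  shows "\<exists>a. psi = smul a phi0 - smul (1/2) phi1 \<and> phi2 = smul a phi1 - smul (a^2) phi0"
proof -
  obtain a where psi: "psi = smul a phi0 - smul (1/2) phi1"
    using nahm_fixed_point_psi assms(1,3,4) by blast
  obtain c where phi2: "phi2 = smul a phi1 + smul c phi0"
    using nahm_fixed_point_phi2 assms(1,2,5) unfolding psi by blast
  have "smul (a^2 + c) (comm phi0 phi1) = 0"
    using assms(6) nahm_third_equation_defect[of a phi1 c] by (simp add: psi phi2)
  then have "c = -(a^2)"
    using assms(7) by (simp add: smul_eq_0_iff add_eq_0_iff2)
  then show ?thesis
    using psi phi2 by (auto simp: cmat_entry_simps)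
qed

lemma nahm_fixed_point_nilpotent:
  assumes "sl2 phi1" "sl2 phi2" "sl2 psi"
    and "comm psi phi0 = smul (1/2) (comm phi0 phi1)"
    and "comm psi phi1 = comm phi0 phi2"
    and "comm phi0 phi1 = 0"
  shows "(\<exists>c1. phi1 = smul c1 phi0) \<and> (\<exists>c2. phi2 = smul c2 phi0) \<and>
    (\<forall>z. phi_of phi0 phi1 phi2 z ** phi_of phi0 phi1 phi2 z = 0)"
proof -
  obtain c1 where phi1: "phi1 = smul c1 phi0"
    using comm_phi0_eq_0_iff assms(1,6) by blast
  obtain a where "psi = smul a phi0 - smul (1/2) phi1"
    using nahm_fixed_point_psi assms(1,3,4) by blast
  then obtain c where "phi2 = smul a phi1 + smul c phi0"
    using nahm_fixed_point_phi2 assms(1,2,5) by blast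
  then have phi2: "phi2 = smul (a * c1 + c) phi0"
    by (simp add: phi1 cmat_entry_simps algebra_simps)
  show ?thesis
    by (auto simp: phi1 phi2 cmat_entry_simps)
qed

lemma phi_minus_add_phi_plus:
  "phi_minus psi phi0 phi1 z + smul z (phi_plus psi phi1 phi2 z) = phi_of phi0 phi1 phi2 z"
  by (simp add: cmat_entry_simps power2_eq_square algebra_simps)

lemma phi_minus_solution:
  "phi_minus (smul a phi0 - smul (1/2) phi1) phi0 phi1 z = smul (1 - a*z) phi0 + smul z phi1"
  by (simp add: cmat_entry_simps algebra_simps)

lemma phi_plus_solution:
  "phi_plus (smul a phi0 - smul (1/2) phi1) phi1 (smul a phi1 - smul (a^2) phi0) z
     = smul a (smul (1 - a*z) phi0 + smul z phi1)"
  by (simp add: cmat_entry_simps power2_eq_square algebra_simps)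

lemma sl2_smul_phi0_add:
  assumes "sl2 B"
  shows "sl2 (smul s phi0 + smul t B)"
  using assms by (simp add: cmat_entry_simps distrib_left[symmetric])

lemma trace_square_smul_phi0_add:
  "trace ((smul s phi0 + smul t B) ** (smul s phi0 + smul t B))
     = 2 * s * t * trace (phi0 ** B) + t^2 * trace (B ** B)"
  by (simp add: cmat_entry_simps power2_eq_square algebra_simps)

lemma sl2_square:
  assumes "sl2 A"
  shows "A ** A = smul ((1/2) * trace (A ** A)) (mat 1)"
proof -
  obtain p q r where "A = mat2 p q r (-p)" using assms by (rule sl2_obtain_mat2)
  then show ?thesis by (simp add: cmat_entry_simps power2_eq_square algebra_simps)
qed

lemma left_eigenvector_sl2_iff:
  assumes "sl2 A"
  shows "(\<exists>\<xi>::complex^2. \<xi> \<noteq> 0 \<and> \<xi> v* (smul y (mat 1) - A) = 0) \<longleftrightarrow> 2*y^2 = trace (A ** A)"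
proof -
  obtain m n k where A: "A = mat2 m n k (-m)" using assms by (rule sl2_obtain_mat2)
  have trace: "trace (A ** A) = 2 * (m^2 + n*k)"
    by (simp add: A cmat_entry_simps power2_eq_square)
  have null: "\<xi> v* (smul y (mat 1) - A) = 0 \<longleftrightarrow> \<xi>$1 * (y - m) = \<xi>$2 * k \<and> \<xi>$1 * n = \<xi>$2 * (y + m)"
    for \<xi> :: "complex^2"
    by (auto simp: A cvec2_eq_iff vector_matrix_mult_def sum_2 smul_def mat_def algebra_simps)
  show ?thesis
  proof
    assume "\<exists>\<xi>::complex^2. \<xi> \<noteq> 0 \<and> \<xi> v* (smul y (mat 1) - A) = 0"
    then obtain \<xi> :: "complex^2" where "\<xi> \<noteq> 0" and eqs: "\<xi>$1 * (y - m) = \<xi>$2 * k \<and> \<xi>$1 * n = \<xi>$2 * (y + m)"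
      using null by blast
    then have nz: "\<xi>$1 \<noteq> 0 \<or> \<xi>$2 \<noteq> 0" by (auto simp: cvec2_eq_iff)
    have "\<xi>$1 * (y^2 - m^2 - n*k) = 0 \<and> \<xi>$2 * (y^2 - m^2 - n*k) = 0"
      using eqs by algebra
    with nz have "y^2 - m^2 - n*k = 0" by auto
    then have "y^2 = m^2 + n*k" by algebra
    then show "2*y^2 = trace (A ** A)" by (simp add: trace)
  next
    assume "2*y^2 = trace (A ** A)"
    then have y: "y^2 = m^2 + n*k" using trace by algebra
    \<comment> \<open>a nonzero row of the adjugate of \<open>y - A\<close>, or any vector if \<open>y - A = 0\<close>\<close>
    obtain s t where nz: "s \<noteq> 0 \<or> t \<noteq> 0" and eqs: "s * (y - m) = t * k \<and> s * n = t * (y + m)"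
    proof (cases "k \<noteq> 0 \<or> y - m \<noteq> 0")
      case True
      with y show ?thesis by (intro that[of k "y - m"]) (auto simp: algebra_simps power2_eq_square)
    next
      case k: False
      show ?thesis
      proof (cases "y + m \<noteq> 0 \<or> n \<noteq> 0")
        case True
        with k show ?thesis by (intro that[of "y + m" n]) (auto simp: algebra_simps)
      next
        case False
        with k show ?thesis by (intro that[of 1 0]) auto
      qed
    qed
    let ?\<xi> = "vector [s, t] :: complex^2"
    have "?\<xi> \<noteq> 0" using nz by (auto simp: cvec2_eq_iff)
    moreover have "?\<xi> v* (smul y (mat 1) - A) = 0" using eqs by (simp add: null)
    ultimately show "\<exists>\<xi>::complex^2. \<xi> \<noteq> 0 \<and> \<xi> v* (smul y (mat 1) - A) = 0" by blast
  qed
qed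

lemma vector_matrix_mult_scaled_shift:
  "\<xi> v* (smul x (mat 1) - smul a A) = (x - a*y) *s \<xi> + a *s (\<xi> v* (smul y (mat 1) - A))"
  by (simp add: cvec2_eq_iff vector_matrix_mult_def sum_2 smul_def mat_def algebra_simps)

lemma common_left_null_vector_iff:
  assumes "sl2 A"
  shows "(\<exists>\<xi>::complex^2. \<xi> \<noteq> 0 \<and> \<xi> v* (smul x (mat 1) - smul a A) = 0 \<and>
            \<xi> v* (smul y (mat 1) - A) = 0)
         \<longleftrightarrow> x = a*y \<and> 2*y^2 = trace (A ** A)"
  using left_eigenvector_sl2_iff[OF assms, of y]
  by (auto simp: vector_matrix_mult_scaled_shift[of _ x a A y] vec_eq_iff)

lemma coker_support_scaled_family:
  assumes "\<And>z. sl2 (N z)"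
  shows "coker_support (\<lambda>z. smul a (N z)) N = {(x, y, z). x = a*y \<and> 2*y^2 = trace (N z ** N z)}"
  using common_left_null_vector_iff[OF assms] by (auto simp: coker_support_def)

lemma nonsingular_conic_spectral:
  assumes "T \<noteq> 0"
  shows "nonsingular_conic (\<lambda>y z. 2*y^2 - (2*z*(1 - a*z) * T + z^2 * U))"
proof -
  define S :: "complex^3^3" where "S = (\<chi> i j.
    if i = 1 \<and> j = 1 then 2 else if i = 2 \<and> j = 2 then 2*a*T - U
    else if (i = 2 \<and> j = 3) \<or> (i = 3 \<and> j = 2) then -T else 0)"
  have "transpose S = S" by (auto simp: S_def transpose_def vec_eq_iff forall_3)
  moreover have "det S = -2*T^2" by (simp add: S_def det_3 power2_eq_square)
  moreover have "quad_form S (vector [s, t, 1]) = 1 * (2 * s^2 - (2*t*(1 - a*t) * T + t^2 * U))" for s t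
    by (simp add: S_def quad_form_def sum_3 power2_eq_square algebra_simps)
  ultimately show ?thesis
    unfolding nonsingular_conic_def using assms by (intro exI[of _ S] exI[of _ 1]) auto
qed

lemma line_pair_eq:
  "{(x, y, z). x = a*y \<and> 2*y^2 = 2*z*(1 - a*z) * 0 + z^2 * (2 * (r::complex)^2)}
     = {(x, y, z). x = a*y \<and> (y = r*z \<or> y = - r*z)}"
  by (auto simp: power_mult_distrib[symmetric] mult.commute[of r] power2_eq_iff)

lemma spectral_curve_line_pair:
  assumes "sl2 B" "comm phi0 B \<noteq> 0" "trace (phi0 ** B) = 0"
  shows "\<exists>r. r \<noteq> 0 \<and>
    {(x, y, z). x = a*y \<and> 2*y^2 = 2*z*(1 - a*z) * trace (phi0 ** B) + z^2 * trace (B ** B)}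
      = {(x, y, z). x = a*y \<and> (y = r*z \<or> y = - r*z)}"
proof -
  obtain p q r where B: "B = mat2 p q r (-p)" using assms(1) by (rule sl2_obtain_mat2)
  have "r = 0" using assms(3) by (simp add: B cmat_entry_simps)
  then have "p \<noteq> 0" and trace: "trace (B ** B) = 2 * p^2"
    using assms(2) by (auto simp: B cmat_entry_simps power2_eq_square)
  then show ?thesis
    unfolding assms(3) trace by (intro exI[of _ p] conjI line_pair_eq)
qed

theorem mainTheorem4:
  fixes phi1 phi2 psi :: cmat
  assumes "sl2 phi1" and "sl2 phi2" and "sl2 psi"
    and e0: "comm psi phi0 = smul (1/2) (comm phi0 phi1)"
    and e1: "comm psi phi1 = comm phi0 phi2"
    and e2: "comm psi phi2 = smul (1/2) (comm phi1 phi2)"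
  shows
    "(comm phi0 phi1 = 0 \<longrightarrow>
        (\<exists>c1. phi1 = smul c1 phi0) \<and> (\<exists>c2. phi2 = smul c2 phi0) \<and>
        (\<forall>z. phi_of phi0 phi1 phi2 z ** phi_of phi0 phi1 phi2 z = 0))
     \<and>
     (comm phi0 phi1 \<noteq> 0 \<longrightarrow>
        (\<exists>a::complex.
           psi = smul a phi0 - smul (1/2) phi1 \<and>
           phi2 = smul a phi1 - smul (a^2) phi0 \<and>
           (\<forall>z. phi_minus psi phi0 phi1 z + smul z (phi_plus psi phi1 phi2 z)
                  = phi_of phi0 phi1 phi2 z) \<and>
           (\<forall>z. phi_minus psi phi0 phi1 z = smul (1 - a*z) phi0 + smul z phi1) \<and>
           (\<forall>z. phi_plus psi phi1 phi2 z = smul a (phi_minus psi phi0 phi1 z)) \<and>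
           (\<forall>z. phi_minus psi phi0 phi1 z ** phi_minus psi phi0 phi1 z
                  = smul ((1/2) * trace (phi_minus psi phi0 phi1 z ** phi_minus psi phi0 phi1 z)) (mat 1)) \<and>
           (\<forall>z. trace (phi_minus psi phi0 phi1 z ** phi_minus psi phi0 phi1 z)
                  = 2*z*(1 - a*z) * trace (phi0 ** phi1) + z^2 * trace (phi1 ** phi1)) \<and>
           coker_support (phi_plus psi phi1 phi2) (phi_minus psi phi0 phi1)
             = {(x, y, z). x = a*y \<and>
                 2*y^2 = 2*z*(1 - a*z) * trace (phi0 ** phi1) + z^2 * trace (phi1 ** phi1)} \<and>
           (trace (phi0 ** phi1) \<noteq> 0 \<longrightarrow>
              nonsingular_conic (\<lambda>y z. 2*y^2 - (2*z*(1 - a*z) * trace (phi0 ** phi1)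
                                                   + z^2 * trace (phi1 ** phi1)))) \<and>
           (trace (phi0 ** phi1) = 0 \<longrightarrow>
              (\<exists>r::complex. r \<noteq> 0 \<and>
                 coker_support (phi_plus psi phi1 phi2) (phi_minus psi phi0 phi1)
                   = {(x, y, z). x = a*y \<and> (y = r*z \<or> y = - r*z)}))))"
proof ((rule conjI; intro impI), goal_cases nilpotent nondegenerate)
  case nilpotent
  then show ?case using nahm_fixed_point_nilpotent assms by blast
next
  case nondegenerate
  then obtain a where psi: "psi = smul a phi0 - smul (1/2) phi1"
    and phi2: "phi2 = smul a phi1 - smul (a^2) phi0"
    using nahm_fixed_point_solution assms by blast
  let ?T = "trace (phi0 ** phi1)" and ?U = "trace (phi1 ** phi1)"
  have minus: "phi_minus psi phi0 phi1 z = smul (1 - a*z) phi0 + smul z phi1" for z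
    by (simp add: psi phi_minus_solution)
  have plus: "phi_plus psi phi1 phi2 z = smul a (phi_minus psi phi0 phi1 z)" for z
    by (simp add: psi phi2 phi_minus_solution phi_plus_solution)
  have sl2_minus: "sl2 (phi_minus psi phi0 phi1 z)" for z
    using assms(1) by (simp add: minus sl2_smul_phi0_add)
  have trace_minus: "trace (phi_minus psi phi0 phi1 z ** phi_minus psi phi0 phi1 z)
      = 2*z*(1 - a*z) * ?T + z^2 * ?U" for z
    by (simp add: minus trace_square_smul_phi0_add)
  have curve: "coker_support (phi_plus psi phi1 phi2) (phi_minus psi phi0 phi1)
      = {(x, y, z). x = a*y \<and> 2*y^2 = 2*z*(1 - a*z) * ?T + z^2 * ?U}"
    using coker_support_scaled_family[of "phi_minus psi phi0 phi1" a] sl2_minus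
    by (simp add: plus [abs_def] trace_minus)
  have lines: "\<exists>r. r \<noteq> 0 \<and> coker_support (phi_plus psi phi1 phi2) (phi_minus psi phi0 phi1)
      = {(x, y, z). x = a*y \<and> (y = r*z \<or> y = - r*z)}" if "?T = 0"
    unfolding curve using spectral_curve_line_pair[OF assms(1) nondegenerate that] .
  show ?case
    by (intro exI[of _ a] conjI allI impI psi phi2 phi_minus_add_phi_plus minus plus curve
        sl2_square[OF sl2_minus] trace_minus nonsingular_conic_spectral lines; assumption)
qed

end
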